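(* Let $B$ be a finite set of closed, bounded line segments in $\mathbb{R}^2$, let $B_i$ be one of its connected components, and let $p\in\mathbb{R}^2$. Then every point of $\mathbb{R}^2\setminus (L_p(B_i)\cup B_i)$ is a clear point with respect to $B_i$, i.e., through every such point there passes a line that does not intersect $B_i$.
   Context: The connected components of $B$ are the connected components of the union of its segments; each $B_i$ is a union of segments of $B$, and $\mathrm{Conv}(B_i)$ denotes its convex hull. For a point $p\in\mathbb{R}^2$, the set $L_p(B_i)\subseteq\mathbb{R}^2$ is defined by: (1) if $B_i$ is a single line segment and $p$ is collinear with it, $L_p(B_i)=\emptyset$; (2) otherwise, if $p$ is a vertex of $\mathrm{Conv}(B_i)$, $L_p(B_i)$ is the closed double wedge bounded by the lines supporting the two edges of $\mathrm{Conv}(B_i)$ meeting at $p$ (the double wedge containing $\mathrm{Conv}(B_i)$); (3) otherwise, if $p$ lies in $\mathrm{Conv}(B_i)$ (interior or boundary), $L_p(B_i)=\mathbb{R}^2$; (4) otherwise, $L_p(B_i)$ is the closed double wedge bounded by the two tangent lines from $p$ to $\mathrm{Conv}(B_i)$ (the double wedge containing $\mathrm{Conv}(B_i)$). A point is blocked with respect to a set of segments $S$ if every line through it meets $S$, and clear otherwise. *)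

theory Defs
  imports "HOL-Analysis.Analysis"
begin

definition line_through :: "real^2 \<Rightarrow> real^2 \<Rightarrow> (real^2) set" where
  "line_through q d = {q + t *\<^sub>R d | t. True}"

definition clear_pt :: "(real^2) set \<Rightarrow> real^2 \<Rightarrow> bool" where
  "clear_pt S q \<longleftrightarrow> (\<exists>d. d \<noteq> 0 \<and> line_through q d \<inter> S = {})"

text \<open>Closed double wedge with apex p bounded by the lines p + R d1 and p + R d2
  (the pair of opposite sectors spanned by d1, d2).\<close>
definition dwedge :: "real^2 \<Rightarrow> real^2 \<Rightarrow> real^2 \<Rightarrow> (real^2) set" where
  "dwedge p d1 d2 = {p + s *\<^sub>R d1 + t *\<^sub>R d2 | s t. s * t \<ge> 0}"

text \<open>d is the direction of a tangent line from p to the convex set K.\<close>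
definition tangent_dir :: "(real^2) set \<Rightarrow> real^2 \<Rightarrow> real^2 \<Rightarrow> bool" where
  "tangent_dir K p d \<longleftrightarrow> d \<noteq> 0 \<and> line_through p d \<inter> K \<noteq> {} \<and>
     (\<exists>n. n \<noteq> 0 \<and> n \<bullet> d = 0 \<and> (\<forall>x\<in>K. n \<bullet> (x - p) \<ge> 0))"

definition edge_dir :: "(real^2) set \<Rightarrow> real^2 \<Rightarrow> real^2 \<Rightarrow> bool" where
  "edge_dir K p d \<longleftrightarrow> d \<noteq> 0 \<and>
     (\<exists>E. E face_of K \<and> aff_dim E = 1 \<and> p \<in> E \<and> affine hull E = line_through p d)"

text \<open>The closed double wedge bounded by two distinct lines through p whose directions
  satisfy P, namely the one containing K.\<close>
definition wedge_by :: "(real^2 \<Rightarrow> bool) \<Rightarrow> real^2 \<Rightarrow> (real^2) set \<Rightarrow> (real^2) set" where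
  "wedge_by P p K = \<Union>{dwedge p d1 d2 | d1 d2. P d1 \<and> P d2 \<and> \<not> collinear {0, d1, d2}
                        \<and> K \<subseteq> dwedge p d1 d2}"

definition Lp :: "(real^2) set \<Rightarrow> real^2 \<Rightarrow> (real^2) set" where
  "Lp C p = (let K = convex hull C in
     if (\<exists>a b. C = closed_segment a b) \<and> collinear (insert p C) then {}
     else if p extreme_point_of K then wedge_by (edge_dir K p) p K
     else if p \<in> K then UNIV
     else wedge_by (tangent_dir K p) p K)"

end

theory Submission
  imports Defs
begin

text \<open>Put K = conv(B_i). If p lies outside K, or is a vertex of the polygon K, then
  separating p from K (respectively from the hull of the other vertices) and rotating
  about p shows that K lies in a sector with apex p whose two bounding rays meet K;
  the lines carrying these rays are tangents from p, respectively edge lines of K at p.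
  A point outside the double wedge of that sector lies outside a closed convex set
  containing B_i, and a line through it parallel to the separating line misses B_i.
  If B_i is a segment collinear with p, the same argument applies to the segment itself.\<close>

definition cross2 :: "real^2 \<Rightarrow> real^2 \<Rightarrow> real" where
  "cross2 a b = a$1 * b$2 - a$2 * b$1"

definition rot90 :: "real^2 \<Rightarrow> real^2" where
  "rot90 d = vector [- d$2, d$1]"

lemma inner_vec2: "(x::real^2) \<bullet> y = x$1 * y$1 + x$2 * y$2"
  by (simp add: inner_vec_def sum_2)

lemma vec2_eq_iff: "(x::real^2) = y \<longleftrightarrow> x$1 = y$1 \<and> x$2 = y$2"
  by (simp add: vec_eq_iff forall_2)

lemma rot90_nth [simp]: "rot90 d $ 1 = - d$2" "rot90 d $ 2 = d$1"
  by (simp_all add: rot90_def)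

lemma rot90_eq_0_iff [simp]: "rot90 d = 0 \<longleftrightarrow> d = 0"
  by (auto simp: vec2_eq_iff)

lemma inner_rot90_self [simp]: "rot90 d \<bullet> d = 0"
  by (simp add: inner_vec2)

lemma scaleR_eq_imp_eq_divide:
  fixes w v :: "'a::real_vector"
  assumes "c \<noteq> 0" "c *\<^sub>R w = a *\<^sub>R v"
  shows "w = (a / c) *\<^sub>R v"
proof -
  have "w = (1 / c) *\<^sub>R (c *\<^sub>R w)" using assms(1) by simp
  also have "\<dots> = (a / c) *\<^sub>R v" using assms(2) by simp
  finally show ?thesis .
qed

lemma cross2_decomposition:
  assumes "cross2 d1 d2 \<noteq> 0"
  shows "w = (cross2 w d2 / cross2 d1 d2) *\<^sub>R d1 + (cross2 d1 w / cross2 d1 d2) *\<^sub>R d2"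
proof -
  have "cross2 d1 d2 *\<^sub>R w = cross2 w d2 *\<^sub>R d1 + cross2 d1 w *\<^sub>R d2"
    by (simp add: vec2_eq_iff cross2_def algebra_simps)
  then have "(1 / cross2 d1 d2) *\<^sub>R (cross2 d1 d2 *\<^sub>R w) =
      (1 / cross2 d1 d2) *\<^sub>R (cross2 w d2 *\<^sub>R d1 + cross2 d1 w *\<^sub>R d2)"
    by simp
  then show ?thesis using assms by (simp add: scaleR_add_right)
qed

lemma inner_cross2_decomposition: "(n \<bullet> n) *\<^sub>R w = (n \<bullet> w) *\<^sub>R n + cross2 n w *\<^sub>R rot90 n"
  by (simp add: vec2_eq_iff cross2_def inner_vec2 algebra_simps)

lemma inner_cross2_lagrange: "(n \<bullet> a) * cross2 n b - cross2 n a * (n \<bullet> b) = (n \<bullet> n) * cross2 a b"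
  by (simp add: cross2_def inner_vec2 algebra_simps)

lemma orthogonal_same_normal_imp_parallel:
  fixes n d w :: "real^2"
  assumes "n \<noteq> 0" "d \<noteq> 0" "n \<bullet> d = 0" "n \<bullet> w = 0"
  shows "w = ((d \<bullet> w) / (d \<bullet> d)) *\<^sub>R d"
proof -
  have "(n \<bullet> n) * cross2 d w = 0"
    using inner_cross2_lagrange[of n d w] assms(3,4) by simp
  then have "cross2 d w = 0" using assms(1) by simp
  then have "(d \<bullet> d) *\<^sub>R w = (d \<bullet> w) *\<^sub>R d"
    using inner_cross2_decomposition[of d w] by simp
  then show ?thesis using assms(2) by (simp add: scaleR_eq_imp_eq_divide)
qed

lemma line_through_eq_affine_hull: "line_through p d = affine hull {p, p + d}"
  by (simp add: line_through_def affine_hull_2_alt) blast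

lemma mem_line_through: "p + t *\<^sub>R d \<in> line_through p d"
  unfolding line_through_def by blast

lemma clear_pt_subset: "clear_pt K q \<Longrightarrow> A \<subseteq> K \<Longrightarrow> clear_pt A q"
  unfolding clear_pt_def by blast

lemma clear_pt_outside_closed_convex:
  assumes "closed S" "convex S" "q \<notin> S"
  shows "clear_pt S q"
proof (cases "S = {}")
  case True
  have "axis 1 (1::real) \<noteq> (0::real^2)" by (simp add: axis_eq_0_iff)
  then show ?thesis using True unfolding clear_pt_def by blast
next
  case False
  obtain n b where n: "n \<bullet> q < b" "\<forall>x\<in>S. b < n \<bullet> x"
    using separating_hyperplane_closed_point[OF assms(2,1,3)] by blast
  have "n \<noteq> 0" using n False by fastforce
  moreover have "n \<bullet> (q + t *\<^sub>R rot90 n) = n \<bullet> q" for t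
    by (simp add: inner_add_right inner_commute[of n])
  then have "line_through q (rot90 n) \<inter> S = {}"
    using n by (fastforce simp: line_through_def)
  ultimately show ?thesis unfolding clear_pt_def by (metis rot90_eq_0_iff)
qed

definition sector :: "real^2 \<Rightarrow> real^2 \<Rightarrow> real^2 \<Rightarrow> (real^2) set" where
  "sector p d1 d2 = {x. cross2 d1 (x - p) \<ge> 0 \<and> cross2 (x - p) d2 \<ge> 0}"

lemma apex_in_sector [simp]: "p \<in> sector p d1 d2"
  by (simp add: sector_def cross2_def)

lemma sector_eq_halfspaces:
  "sector p d1 d2 = {x. rot90 d1 \<bullet> x \<ge> rot90 d1 \<bullet> p} \<inter> {x. rot90 d2 \<bullet> x \<le> rot90 d2 \<bullet> p}"
  by (auto simp: sector_def cross2_def inner_vec2 algebra_simps)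

lemma convex_sector: "convex (sector p d1 d2)"
  by (simp add: sector_eq_halfspaces convex_Int convex_halfspace_ge convex_halfspace_le)

lemma closed_sector: "closed (sector p d1 d2)"
  by (simp add: sector_eq_halfspaces closed_Int closed_halfspace_ge closed_halfspace_le)

lemma sector_subset_dwedge:
  assumes "cross2 d1 d2 > 0"
  shows "sector p d1 d2 \<subseteq> dwedge p d1 d2"
proof
  fix x assume "x \<in> sector p d1 d2"
  then have nonneg: "cross2 (x - p) d2 / cross2 d1 d2 \<ge> 0" "cross2 d1 (x - p) / cross2 d1 d2 \<ge> 0"
    using assms by (simp_all add: sector_def)
  have "x = p + (cross2 (x - p) d2 / cross2 d1 d2) *\<^sub>R d1 + (cross2 d1 (x - p) / cross2 d1 d2) *\<^sub>R d2"
    using cross2_decomposition[of d1 d2 "x - p"] assms by (simp add: algebra_simps)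
  then show "x \<in> dwedge p d1 d2"
    unfolding dwedge_def using nonneg by (intro CollectI exI conjI) (assumption, rule mult_nonneg_nonneg)
qed

lemma clear_pt_outside_wedge_by:
  assumes pos: "cross2 d1 d2 > 0" and K: "K \<subseteq> sector p d1 d2"
    and "P d1" "P d2" and q: "q \<notin> wedge_by P p K" and "A \<subseteq> K"
  shows "clear_pt A q"
proof -
  have "\<not> collinear {0, d1, d2}"
  proof
    assume "collinear {0, d1, d2}"
    then consider "d1 = 0" | "d2 = 0" | c where "d2 = c *\<^sub>R d1"
      unfolding collinear_lemma by blast
    then show False using pos by cases (auto simp: cross2_def)
  qed
  moreover have "K \<subseteq> dwedge p d1 d2" using K sector_subset_dwedge[OF pos] by blast
  ultimately have "q \<notin> dwedge p d1 d2" using q \<open>P d1\<close> \<open>P d2\<close> unfolding wedge_by_def by blast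
  then have "q \<notin> sector p d1 d2" using sector_subset_dwedge[OF pos] by blast
  then have "clear_pt (sector p d1 d2) q"
    by (intro clear_pt_outside_closed_convex closed_sector convex_sector)
  then show ?thesis using K \<open>A \<subseteq> K\<close> by (blast intro: clear_pt_subset)
qed

lemma tangent_dir_if_supporting:
  assumes "d \<noteq> 0" "n \<noteq> 0" "n \<bullet> d = 0" "p + d \<in> K" "\<forall>x\<in>K. n \<bullet> (x - p) \<ge> 0"
  shows "tangent_dir K p d"
  using assms mem_line_through[of p 1 d] unfolding tangent_dir_def by auto

lemma edge_dir_if_supporting:
  assumes "convex K" "p \<in> K"
    and "d \<noteq> 0" "n \<noteq> 0" "n \<bullet> d = 0" "p + d \<in> K" "\<forall>x\<in>K. n \<bullet> (x - p) \<ge> 0"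
  shows "edge_dir K p d"
proof -
  define E where "E = K \<inter> {x. n \<bullet> x = n \<bullet> p}"
  have "E face_of K"
    unfolding E_def using assms(1,7) by (intro face_of_Int_supporting_hyperplane_ge) (auto simp: inner_diff_right)
  have "E \<subseteq> line_through p d"
  proof
    fix x assume "x \<in> E"
    then have "n \<bullet> (x - p) = 0" by (simp add: E_def inner_diff_right)
    then have "x = p + ((d \<bullet> (x - p)) / (d \<bullet> d)) *\<^sub>R d"
      using orthogonal_same_normal_imp_parallel[OF assms(4,3,5)] by (metis add.commute diff_add_cancel)
    then show "x \<in> line_through p d" by (metis mem_line_through)
  qed
  moreover have "{p, p + d} \<subseteq> E"
    using assms(2,5,6) by (simp add: E_def inner_add_right)
  ultimately have hull: "affine hull E = affine hull {p, p + d}"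
    unfolding line_through_eq_affine_hull
    by (metis affine_affine_hull hull_minimal hull_mono subset_antisym)
  then have "aff_dim E = 1"
    using assms(3) by (metis aff_dim_affine_hull aff_dim_2 add_cancel_right_right of_nat_1)
  then show ?thesis
    unfolding edge_dir_def using \<open>E face_of K\<close> \<open>{p, p + d} \<subseteq> E\<close> hull assms(3)
    by (auto simp: line_through_eq_affine_hull)
qed

lemma sector_bounding_dirs:
  assumes pos: "cross2 d1 d2 > 0" and "p + d1 \<in> K" "p + d2 \<in> K" and K: "K \<subseteq> sector p d1 d2"
    and supp: "\<And>d n. d \<noteq> 0 \<Longrightarrow> n \<noteq> 0 \<Longrightarrow> n \<bullet> d = 0 \<Longrightarrow> p + d \<in> K \<Longrightarrow>
                 \<forall>x\<in>K. n \<bullet> (x - p) \<ge> 0 \<Longrightarrow> P d"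
  shows "P d1 \<and> P d2"
proof -
  have "d1 \<noteq> 0" "d2 \<noteq> 0" using pos by (auto simp: cross2_def)
  moreover have "\<forall>x\<in>K. rot90 d1 \<bullet> (x - p) \<ge> 0" "\<forall>x\<in>K. (- rot90 d2) \<bullet> (x - p) \<ge> 0"
    using K by (auto simp: sector_def cross2_def inner_vec2 mult.commute)
  ultimately show ?thesis
    using supp[of d1 "rot90 d1"] supp[of d2 "- rot90 d2"] assms(2,3) by auto
qed

lemma collinear_insert_if_cross2_proportional:
  assumes "n \<noteq> 0" "\<forall>x\<in>K. cross2 n (x - p) = c * (n \<bullet> (x - p))"
  shows "collinear (insert p K)"
proof -
  define v where "v = n + c *\<^sub>R rot90 n"
  have "x = p + ((n \<bullet> (x - p)) / (n \<bullet> n)) *\<^sub>R v" if "x \<in> K" for x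
  proof -
    have "(n \<bullet> n) *\<^sub>R (x - p) = (n \<bullet> (x - p)) *\<^sub>R v"
      using inner_cross2_decomposition[of n "x - p"] assms(2) that
      by (simp add: v_def scaleR_add_right)
    then have "x - p = ((n \<bullet> (x - p)) / (n \<bullet> n)) *\<^sub>R v"
      using assms(1) by (simp add: scaleR_eq_imp_eq_divide)
    then show ?thesis by (simp add: algebra_simps)
  qed
  then show ?thesis
    unfolding collinear_alt by (intro exI[of _ p] exI[of _ v]) (auto intro: exI[of _ 0])
qed

text \<open>Among the points of K, the slope cross2 n (x - p) / (n \<bullet> (x - p)) measured
  from p against the separating normal n attains a minimum and a maximum; the two
  extremal points span the sector.\<close>

lemma sector_of_external_point:
  assumes "compact K" "convex K" "p \<notin> K" "\<not> collinear (insert p K)"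
  obtains d1 d2 where "cross2 d1 d2 > 0" "p + d1 \<in> K" "p + d2 \<in> K" "K \<subseteq> sector p d1 d2"
proof -
  have "K \<noteq> {}" using assms(4) by auto
  obtain n b where nb: "n \<bullet> p < b" "\<forall>x\<in>K. b < n \<bullet> x"
    using separating_hyperplane_closed_point[OF assms(2) compact_imp_closed[OF assms(1)] assms(3)]
    by blast
  have front: "n \<bullet> (x - p) > 0" if "x \<in> K" for x
    using nb that by (auto simp: inner_diff_right)
  have nn: "n \<bullet> n > 0" using front \<open>K \<noteq> {}\<close> by fastforce
  define r where "r x = cross2 n (x - p) / (n \<bullet> (x - p))" for x
  have r: "cross2 n (x - p) = r x * (n \<bullet> (x - p))" if "x \<in> K" for x
    using front[OF that] by (simp add: r_def)
  have "continuous_on K r"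
    unfolding r_def cross2_def using front
    by (intro continuous_intros) (auto simp del: inner_diff_right, fastforce)
  then obtain y1 y2 where y: "y1 \<in> K" "y2 \<in> K" and minmax: "\<forall>x\<in>K. r y1 \<le> r x \<and> r x \<le> r y2"
    using continuous_attains_inf[OF assms(1) \<open>K \<noteq> {}\<close>] continuous_attains_sup[OF assms(1) \<open>K \<noteq> {}\<close>]
    by metis
  have sign: "(n \<bullet> n) * cross2 (a - p) (c - p) = (n \<bullet> (a - p)) * (n \<bullet> (c - p)) * (r c - r a)"
    if "a \<in> K" "c \<in> K" for a c
    using inner_cross2_lagrange[of n "a - p" "c - p"] r[OF that(1)] r[OF that(2)]
    by (simp add: algebra_simps)
  have ordered: "cross2 (a - p) (c - p) \<ge> 0" if "a \<in> K" "c \<in> K" "r a \<le> r c" for a c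
  proof -
    have "(n \<bullet> n) * cross2 (a - p) (c - p) \<ge> 0"
      using sign[OF that(1,2)] front[OF that(1)] front[OF that(2)] that(3) by simp
    then show ?thesis using nn by (simp add: zero_le_mult_iff)
  qed
  have "r y1 < r y2"
  proof (rule ccontr)
    assume "\<not> r y1 < r y2"
    then have "\<forall>x\<in>K. cross2 n (x - p) = r y1 * (n \<bullet> (x - p))"
      using minmax r by (metis order_antisym order_trans not_le)
    then have "collinear (insert p K)"
      using nn by (intro collinear_insert_if_cross2_proportional) auto
    then show False using assms(4) by blast
  qed
  then have "(n \<bullet> n) * cross2 (y1 - p) (y2 - p) > 0"
    using sign[OF y] front[OF y(1)] front[OF y(2)] by simp
  then have "cross2 (y1 - p) (y2 - p) > 0"
    using nn by (simp add: zero_less_mult_iff)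
  moreover have "K \<subseteq> sector p (y1 - p) (y2 - p)"
    using ordered y minmax by (auto simp: sector_def)
  ultimately show ?thesis using that y by simp
qed

text \<open>At a vertex p of a polygon, the sector comes from the hull of the remaining
  vertices, which misses p.\<close>

lemma sector_at_extreme_point:
  assumes "polytope K" "p extreme_point_of K" "\<not> collinear K"
  obtains d1 d2 where "cross2 d1 d2 > 0" "p + d1 \<in> K" "p + d2 \<in> K" "K \<subseteq> sector p d1 d2"
proof -
  obtain S where S: "finite S" "K = convex hull S"
    using assms(1) unfolding polytope_def by blast
  have "p \<in> S" using assms(2) unfolding S(2) by (rule extreme_point_of_convex_hull)
  define K' where "K' = convex hull (S - {p})"
  have "K' \<subseteq> K" unfolding K'_def S(2) by (rule hull_mono) blast
  have "S \<subseteq> insert p K'" unfolding K'_def using hull_subset[of "S - {p}" convex] by blast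
  then have K_sub: "K \<subseteq> convex hull (insert p K')" unfolding S(2) by (rule hull_mono)
  have "compact K'" "convex K'"
    unfolding K'_def using S(1) by (simp_all add: compact_convex_hull finite_imp_compact)
  have "convex (K - {p})"
    using assms(2) S(2) extreme_point_of_stillconvex[of K p] by simp
  then have "K' \<subseteq> K - {p}"
    unfolding K'_def using S(2) hull_subset[of S convex] by (intro hull_minimal) auto
  then have "p \<notin> K'" by blast
  moreover have "\<not> collinear (insert p K')"
  proof
    assume "collinear (insert p K')"
    then have "collinear (affine hull (insert p K'))" by (simp add: collinear_affine_hull_collinear)
    then have "collinear K"
      using collinear_subset order_trans[OF K_sub convex_hull_subset_affine_hull] by blast
    then show False using assms(3) by blast
  qed
  ultimately obtain d1 d2 where d: "cross2 d1 d2 > 0" "p + d1 \<in> K'" "p + d2 \<in> K'"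
    and "K' \<subseteq> sector p d1 d2"
    using sector_of_external_point[OF \<open>compact K'\<close> \<open>convex K'\<close>] by blast
  then have "convex hull (insert p K') \<subseteq> sector p d1 d2"
    by (intro hull_minimal) (simp_all add: convex_sector)
  then show ?thesis using that d \<open>K' \<subseteq> K\<close> K_sub by blast
qed

lemma finite_Union_segments_convex_hull:
  assumes "finite F" "\<forall>s\<in>F. \<exists>a b. s = closed_segment a b"
  obtains S where "finite S" "S \<subseteq> \<Union>F" "\<Union>F \<subseteq> convex hull S"
  using assms
proof (induction F arbitrary: thesis rule: finite_induct)
  case empty
  then show ?case by blast
next
  case (insert s F)
  obtain S where S: "finite S" "S \<subseteq> \<Union>F" "\<Union>F \<subseteq> convex hull S"
    using insert.IH insert.prems(2) by blast
  obtain a b where s: "s = closed_segment a b" using insert.prems(2) by blast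
  have "convex hull {a, b} \<subseteq> convex hull ({a, b} \<union> S)" "convex hull S \<subseteq> convex hull ({a, b} \<union> S)"
    by (intro hull_mono; blast)+
  then have "s \<subseteq> convex hull ({a, b} \<union> S)" "\<Union>F \<subseteq> convex hull ({a, b} \<union> S)"
    using S(3) by (auto simp only: s segment_convex_hull)
  then show ?case using S s by (intro insert.prems(1)[of "{a, b} \<union> S"]) auto
qed

lemma polytope_convex_hull_Union_segments:
  assumes "finite F" "\<forall>s\<in>F. \<exists>a b. s = closed_segment a b"
  shows "polytope (convex hull \<Union>F)"
proof -
  obtain S where S: "finite S" "S \<subseteq> \<Union>F" "\<Union>F \<subseteq> convex hull S"
    using finite_Union_segments_convex_hull[OF assms] by blast
  have "convex hull \<Union>F = convex hull S"
    using S(2,3) by (metis convex_convex_hull hull_minimal hull_mono subset_antisym)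
  then show ?thesis using S(1) by (simp add: polytope_convex_hull)
qed

lemma component_eq_Union_segments:
  fixes B :: "'a::real_normed_vector set set"
  assumes "\<forall>s\<in>B. \<exists>a b. s = closed_segment a b" and "C \<in> components (\<Union>B)"
  shows "C = \<Union>{s \<in> B. s \<subseteq> C}"
proof
  show "C \<subseteq> \<Union>{s \<in> B. s \<subseteq> C}"
  proof
    fix x assume "x \<in> C"
    then obtain s where s: "s \<in> B" "x \<in> s" using in_components_subset[OF assms(2)] by blast
    obtain a b where "s = closed_segment a b" using assms(1) s(1) by blast
    then have "connected s" by simp
    moreover have "s \<subseteq> \<Union>B" using s(1) by blast
    moreover have "C \<inter> s \<noteq> {}" using s(2) \<open>x \<in> C\<close> by blast
    ultimately have "s \<subseteq> C" by (rule components_maximal[OF assms(2)])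
    then show "x \<in> \<Union>{s \<in> B. s \<subseteq> C}" using s by blast
  qed
qed blast

lemma compact_component_segments:
  fixes B :: "'a::euclidean_space set set"
  assumes "finite B" "\<forall>s\<in>B. \<exists>a b. s = closed_segment a b" "C \<in> components (\<Union>B)"
  shows "compact C"
proof -
  have "C = \<Union>{s \<in> B. s \<subseteq> C}" by (rule component_eq_Union_segments[OF assms(2,3)])
  also have "compact \<dots>" using assms(1,2) by (intro compact_Union) auto
  finally show ?thesis .
qed

lemma polytope_convex_hull_component_segments:
  fixes B :: "'a::euclidean_space set set"
  assumes "finite B" "\<forall>s\<in>B. \<exists>a b. s = closed_segment a b" "C \<in> components (\<Union>B)"
  shows "polytope (convex hull C)"
proof (subst component_eq_Union_segments[OF assms(2,3)])
  show "polytope (convex hull \<Union>{s \<in> B. s \<subseteq> C})"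
    using assms(1,2) by (intro polytope_convex_hull_Union_segments) auto
qed

lemma not_collinear_insert_convex_hull:
  fixes C :: "'a::euclidean_space set"
  assumes "compact C" "connected C" "C \<noteq> {}"
    and "\<not> ((\<exists>a b. C = closed_segment a b) \<and> collinear (insert p C))"
  shows "\<not> collinear (insert p (convex hull C))"
proof
  assume "collinear (insert p (convex hull C))"
  then have "collinear (insert p C)" "collinear C"
    using collinear_subset hull_subset[of C convex] by (metis insert_mono subset_insertI)+
  moreover have "convex C"
    using \<open>collinear C\<close> assms(2) convex_connected_collinear by blast
  ultimately show False
    using assms(1,3,4) compact_convex_collinear_segment[of C] by blast
qed

lemma Lp_if_not_collinear_segment:
  assumes "\<not> ((\<exists>a b. C = closed_segment a b) \<and> collinear (insert p C))"
  shows "Lp C p = (if p extreme_point_of convex hull C then wedge_by (edge_dir (convex hull C) p) p (convex hull C)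
     else if p \<in> convex hull C then UNIV
     else wedge_by (tangent_dir (convex hull C) p) p (convex hull C))"
  unfolding Lp_def Let_def by (simp only: if_not_P[OF assms])

lemma clear_pt_outside_edge_wedge:
  assumes "polytope K" "p extreme_point_of K" "\<not> collinear K"
    and "q \<notin> wedge_by (edge_dir K p) p K" "A \<subseteq> K"
  shows "clear_pt A q"
proof -
  obtain d1 d2 where d: "cross2 d1 d2 > 0" "p + d1 \<in> K" "p + d2 \<in> K" "K \<subseteq> sector p d1 d2"
    using sector_at_extreme_point[OF assms(1-3)] by blast
  have "p \<in> K" using assms(2) by (simp add: extreme_point_of_def)
  then have "edge_dir K p d1 \<and> edge_dir K p d2"
    using sector_bounding_dirs[OF d, of "edge_dir K p"]
      edge_dir_if_supporting[OF polytope_imp_convex[OF assms(1)]] by blast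
  then show ?thesis using clear_pt_outside_wedge_by[OF d(1,4)] assms(4,5) by blast
qed

lemma clear_pt_outside_tangent_wedge:
  assumes "compact K" "convex K" "p \<notin> K" "\<not> collinear (insert p K)"
    and "q \<notin> wedge_by (tangent_dir K p) p K" "A \<subseteq> K"
  shows "clear_pt A q"
proof -
  obtain d1 d2 where d: "cross2 d1 d2 > 0" "p + d1 \<in> K" "p + d2 \<in> K" "K \<subseteq> sector p d1 d2"
    using sector_of_external_point[OF assms(1-4)] by blast
  then have "tangent_dir K p d1 \<and> tangent_dir K p d2"
    using sector_bounding_dirs[OF d, of "tangent_dir K p"] tangent_dir_if_supporting by blast
  then show ?thesis using clear_pt_outside_wedge_by[OF d(1,4)] assms(5,6) by blast
qed

theorem lemma3:
  fixes B :: "(real^2) set set" and Bi :: "(real^2) set" and p :: "real^2"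
  assumes "finite B"
    and "\<forall>s\<in>B. \<exists>a b. s = closed_segment a b"
    and "Bi \<in> components (\<Union>B)"
  shows "\<forall>q. q \<notin> Lp Bi p \<union> Bi \<longrightarrow> clear_pt Bi q"
proof (intro allI impI)
  fix q assume q: "q \<notin> Lp Bi p \<union> Bi"
  define K where "K = convex hull Bi"
  have "compact Bi" "polytope K" "Bi \<subseteq> K"
    using compact_component_segments[OF assms] polytope_convex_hull_component_segments[OF assms]
    by (simp_all add: K_def hull_subset)
  show "clear_pt Bi q"
  proof (cases "(\<exists>a b. Bi = closed_segment a b) \<and> collinear (insert p Bi)")
    case True
    then show ?thesis using q by (auto intro: clear_pt_outside_closed_convex)
  next
    case False
    have not_collinear: "\<not> collinear (insert p K)"
      unfolding K_def using not_collinear_insert_convex_hull[OF \<open>compact Bi\<close> _ _ False]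
        in_components_connected[OF assms(3)] in_components_nonempty[OF assms(3)] by blast
    have Lp: "Lp Bi p = (if p extreme_point_of K then wedge_by (edge_dir K p) p K
        else if p \<in> K then UNIV else wedge_by (tangent_dir K p) p K)"
      unfolding K_def by (rule Lp_if_not_collinear_segment[OF False])
    consider "p extreme_point_of K" | "p \<notin> K" | "p \<in> K" "\<not> p extreme_point_of K" by blast
    then show ?thesis
    proof cases
      case 1
      then show ?thesis
        using clear_pt_outside_edge_wedge[OF \<open>polytope K\<close> 1] q Lp not_collinear \<open>Bi \<subseteq> K\<close>
        by (simp add: insert_absorb extreme_point_of_def)
    next
      case 2
      then have "\<not> p extreme_point_of K" by (simp add: extreme_point_of_def)
      then show ?thesis
        using clear_pt_outside_tangent_wedge[OF polytope_imp_compact polytope_imp_convex]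
          \<open>polytope K\<close> 2 q Lp not_collinear \<open>Bi \<subseteq> K\<close> by simp
    next
      case 3
      then show ?thesis using q Lp by simp
    qed
  qed
qed

end
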